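(* Let $R$ be a commutative ring with identity, let $A$ be a $2\times 2$ matrix over $R$, and let $\mathbf u$ be a unimodular row of length $2$ over $R$. Then $\mathbf u$ belongs to the submodule of $R^2$ generated by the rows of $A$ if and only if there exists an invertible $2\times 2$ matrix $P$ over $R$ such that $\mathbf u$ is the first row of $PA$.
   Context: A row $[r_1,\dots,r_n]$ over $R$ is unimodular if $r_1,\dots,r_n$ generate the unit ideal $R$. *)

theory Defs
  imports "HOL-Analysis.Analysis"
begin

definition unimodular_row :: "('a::comm_ring_1)^'n \<Rightarrow> bool" where
  "unimodular_row u \<longleftrightarrow> (\<exists>c::'a^'n. (\<Sum>i\<in>UNIV. c $ i * u $ i) = 1)"

definition row_submodule :: "('a::comm_ring_1)^'n^'m \<Rightarrow> ('a^'n) set" where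
  "row_submodule A = {v. \<exists>c::'a^'m. v = (\<Sum>i\<in>UNIV. c $ i *s row i A)}"

end

theory Submission
  imports Defs
begin

text \<open>Writing u = c A, a relation d \<bullet> u = 1 gives (A d) \<bullet> c = 1, so the coefficient row c is
  itself unimodular. A unimodular row (c1, c2) with d1 c1 + d2 c2 = 1 is the first row of the
  matrix with second row (-d2, d1), which has determinant 1. Conversely, the first row of P A is
  always the combination of the rows of A with coefficients the first row of P.\<close>

lemma sum_scale_rows_eq_vector_matrix_mult:
  "(\<Sum>i\<in>UNIV. c $ i *s row i A) = c v* A"
  by (simp add: vec_eq_iff vector_matrix_mult_def row_def sum_component mult.commute)

lemma row_submodule_eq_range_vector_matrix_mult:
  "row_submodule A = range (\<lambda>c. c v* A)"
  by (auto simp: row_submodule_def sum_scale_rows_eq_vector_matrix_mult)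

lemma row_matrix_matrix_mult: "row i (P ** A) = row i P v* A"
  by (simp add: vec_eq_iff row_def matrix_matrix_mult_def vector_matrix_mult_def mult.commute)

lemma unimodular_row_vector_matrix_multD:
  fixes A :: "('a::comm_ring_1)^'n^'m"
  assumes "unimodular_row (c v* A)"
  shows "unimodular_row c"
proof -
  obtain d where d: "(\<Sum>j\<in>UNIV. d $ j * (c v* A) $ j) = 1"
    using assms unfolding unimodular_row_def by blast
  have "(\<Sum>i\<in>UNIV. (A *v d) $ i * c $ i) = (\<Sum>i\<in>UNIV. \<Sum>j\<in>UNIV. c $ i * (A $ i $ j * d $ j))"
    by (simp add: matrix_vector_mult_def sum_distrib_left mult.commute)
  also have "\<dots> = (\<Sum>j\<in>UNIV. \<Sum>i\<in>UNIV. c $ i * (A $ i $ j * d $ j))"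
    by (rule sum.swap)
  also have "\<dots> = (\<Sum>j\<in>UNIV. d $ j * (c v* A) $ j)"
    by (simp add: vector_matrix_mult_def sum_distrib_left ac_simps)
  also have "\<dots> = 1"
    by (fact d)
  finally show ?thesis
    unfolding unimodular_row_def by blast
qed

lemma unimodular_row_completion:
  fixes c :: "('a::comm_ring_1)^2"
  assumes "unimodular_row c"
  obtains P :: "'a^2^2" where "invertible P" and "row 1 P = c"
proof -
  obtain d :: "'a^2" where d: "d $ 1 * c $ 1 + d $ 2 * c $ 2 = 1"
    using assms by (auto simp: unimodular_row_def sum_2)
  define P :: "'a^2^2" where
    "P = (\<chi> i j. if i = 1 then c $ j else if j = 1 then - d $ 2 else d $ 1)"
  define Q :: "'a^2^2" where
    "Q = (\<chi> i j. if i = 1 then if j = 1 then d $ 1 else - c $ 2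
                  else if j = 1 then d $ 2 else c $ 1)"
  have "P ** Q = mat 1" "Q ** P = mat 1"
    using d by (simp_all add: P_def Q_def vec_eq_iff matrix_matrix_mult_def mat_def sum_2
        forall_2 algebra_simps)
  then have "invertible P"
    unfolding invertible_def by blast
  moreover have "row 1 P = c"
    by (simp add: P_def row_def vec_eq_iff)
  ultimately show ?thesis
    using that by blast
qed

theorem lemma2p3:
  fixes A :: "('a::comm_ring_1)^2^2" and u :: "'a^2"
  assumes "unimodular_row u"
  shows "u \<in> row_submodule A \<longleftrightarrow> (\<exists>P::'a^2^2. invertible P \<and> row 1 (P ** A) = u)"
proof
  assume "u \<in> row_submodule A"
  then obtain c where u: "u = c v* A"
    by (auto simp: row_submodule_eq_range_vector_matrix_mult)
  then have "unimodular_row c"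
    using assms unimodular_row_vector_matrix_multD by blast
  then obtain P :: "'a^2^2" where "invertible P" "row 1 P = c"
    by (rule unimodular_row_completion)
  then show "\<exists>P::'a^2^2. invertible P \<and> row 1 (P ** A) = u"
    using u by (auto simp: row_matrix_matrix_mult)
next
  assume "\<exists>P::'a^2^2. invertible P \<and> row 1 (P ** A) = u"
  then show "u \<in> row_submodule A"
    by (auto simp: row_matrix_matrix_mult row_submodule_eq_range_vector_matrix_mult)
qed

end
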